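(* Let $\{X(t)\}$ be generated by the voting diffusion model with a communicating pair process $\{\{i_1(t),i_2(t)\}\}$ and a subject process $\{S(t)\}$. Fix a candidate $j\in[n]$ and define the random graph $G^{(j)}=([m],E^{(j)})$ by $$E^{(j)}=\Big\{\{a,b\}: a\ne b\in[m],\ \sum_{t=0}^{\infty}\mathbf{1}_{\{\{i_1(t),i_2(t)\}=\{a,b\}\}}\,\mathbf{1}_{\{j\in S(t)\}}=\infty\Big\},$$ i.e. $\{a,b\}$ is an edge iff $a$ and $b$ are the communicating pair and candidate $j$ is in the subject set at infinitely many times. Then for any agents $a,b\in[m]$, the event that $a$ and $b$ lie in the same connected component of $G^{(j)}$ is contained in the event $\{\lim_{t\to\infty}(X_{aj}(t)-X_{bj}(t))=0\}$.
   Context: Voting diffusion model: there are $m$ agents indexed by $[m]=\{1,\dots,m\}$ and $n$ candidates indexed by $[n]$. The opinion profile at time $t\in\{0,1,2,\dots\}$ is a random real $m\times n$ matrix $X(t)$, where $X_{ij}(t)$ is agent $i$'s score of candidate $j$. A communicating pair process is a sequence of random unordered pairs $\{i_1(t),i_2(t)\}$ with $i_1(t)\ne i_2(t)\in[m]$; a subject process is a sequence of random subsets $S(t)\subseteq[n]$; both are arbitrary (measurable) processes. The update is: $X_{ij}(t+1)=\tfrac12\big(X_{i_1(t)j}(t)+X_{i_2(t)j}(t)\big)$ if $i\in\{i_1(t),i_2(t)\}$ and $j\in S(t)$, and $X_{ij}(t+1)=X_{ij}(t)$ otherwise. *)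

theory Defs
  imports "HOL-Probability.Probability"
begin

text \<open>Edge set of the random graph G^(j) along one sample path: agents are [m] = {1..m};
  i1 t, i2 t is the communicating pair and S t the subject set at time t.
  The sum of indicators over t is infinite iff infinitely many times qualify.\<close>
definition voting_edges ::
  "nat \<Rightarrow> (nat \<Rightarrow> nat) \<Rightarrow> (nat \<Rightarrow> nat) \<Rightarrow> (nat \<Rightarrow> nat set) \<Rightarrow> nat \<Rightarrow> nat set set" where
  "voting_edges m i1 i2 S j =
     {{a, b} | a b. a \<in> {1..m} \<and> b \<in> {1..m} \<and> a \<noteq> b \<and>
        infinite {t. {i1 t, i2 t} = {a, b} \<and> j \<in> S t}}"

definition same_component :: "nat set set \<Rightarrow> nat \<Rightarrow> nat \<Rightarrow> bool" where
  "same_component E a b \<longleftrightarrow> (a, b) \<in> {(x, y). {x, y} \<in> E}\<^sup>*"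

end

theory Submission
  imports Defs
begin

(* Fix a sample path and the candidate j; only column j of the opinion matrix
   matters, so we study a single real opinion x t i per agent, updated by pairwise averaging
   at the "active" times (those with j in the subject set).
   (1) Energy: the sum of squared opinions drops by half the squared gap of the active pair
       at every step, so these squared gaps are summable and tend to 0.
   (2) Graph: only finitely many activations use a non-edge of G, so after some time T every
       active pair is an edge; in particular the component C of a is then closed under
       averaging.
   (3) Gap: if |x t a - x t b| >= r with a, b in C, a pigeonhole argument splits C into an
       upper part U and a lower part L separated by a gap r / |C|.  Averaging inside U or
       inside L preserves this separation, and some edge between U and L is activated
       infinitely often, so at the first activation joining U and L the active gap exceeds
       r / |C| -- contradicting (1) for large t. *)

text \<open>Pigeonhole: among the values y on a finite set C containing a and b with
  y a - y b \<ge> \<epsilon>, some window of width \<epsilon> / |C| between y b and y a contains no value,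
  which splits C into an upper part containing a and a lower part containing b.\<close>
lemma gap_split:
  fixes y :: "'a \<Rightarrow> real"
  assumes fin: "finite C" and aC: "a \<in> C" and bC: "b \<in> C" and ep: "\<epsilon> > 0"
    and dif: "y a - y b \<ge> \<epsilon>"
  shows "\<exists>U L \<theta>. U \<union> L = C \<and> U \<inter> L = {} \<and> a \<in> U \<and> b \<in> L \<and>
           (\<forall>i\<in>L. y i < \<theta>) \<and> (\<forall>i\<in>U. \<theta> + \<epsilon> / card C \<le> y i)"
proof -
  define l where "l = card C"
  have l1: "l \<ge> 1" using fin aC unfolding l_def by (metis card_0_eq empty_iff less_one not_le)
  define h where "h = \<epsilon> / l"
  have hpos: "h > 0" using ep l1 unfolding h_def by auto
  define k where "k i = \<lfloor>(y i - y b) / h\<rfloor>" for i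
  have kb: "k b = 0" unfolding k_def by simp
  have "(y a - y b) / h \<ge> \<epsilon> / h" using dif hpos by (simp add: divide_right_mono)
  moreover have "\<epsilon> / h = l" unfolding h_def using ep l1 by auto
  ultimately have ka: "k a \<ge> int l" unfolding k_def by (simp add: le_floor_iff)
  have "\<not> {1..int l} \<subseteq> k ` C"
  proof
    assume "{1..int l} \<subseteq> k ` C"
    hence "insert 0 {1..int l} \<subseteq> k ` C" using kb bC by auto
    hence "card (insert 0 {1..int l}) \<le> card (k ` C)" using fin by (intro card_mono) auto
    also have "\<dots> \<le> l" unfolding l_def using fin by (rule card_image_le)
    finally show False by simp
  qed
  then obtain k0 where k0: "k0 \<in> {1..int l}" "k0 \<notin> k ` C" by blast
  define U where "U = {i\<in>C. k i > k0}"
  define L where "L = {i\<in>C. k i < k0}"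
  define \<theta> where "\<theta> = y b + k0 * h"
  have "U \<union> L = C"
    using k0(2) unfolding U_def L_def by (auto simp: image_iff not_less_iff_gr_or_eq)
  moreover have "U \<inter> L = {}" "b \<in> L" unfolding U_def L_def using bC kb k0 by auto
  moreover have "a \<in> U" unfolding U_def using aC ka k0 by (auto simp: image_iff)
  moreover have "\<forall>i\<in>L. y i < \<theta>"
  proof
    fix i assume "i \<in> L"
    hence "(y i - y b) / h < k0" unfolding L_def k_def by (simp add: floor_less_iff)
    thus "y i < \<theta>" unfolding \<theta>_def using hpos by (simp add: divide_less_eq)
  qed
  moreover have "\<forall>i\<in>U. \<theta> + \<epsilon> / card C \<le> y i"
  proof
    fix i assume "i \<in> U"
    hence "k i \<ge> k0 + 1" unfolding U_def by auto
    hence "(y i - y b) / h \<ge> k0 + 1" unfolding k_def by (simp add: le_floor_iff)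
    hence "y i - y b \<ge> (k0 + 1) * h" using hpos by (simp add: le_divide_eq)
    thus "\<theta> + \<epsilon> / card C \<le> y i"
      unfolding \<theta>_def h_def l_def by (simp add: algebra_simps add_divide_distrib)
  qed
  ultimately show ?thesis by blast
qed

definition adj :: "'a set set \<Rightarrow> ('a \<times> 'a) set" where
  "adj E = {(x, y). {x, y} \<in> E}"

lemma sym_adj: "sym (adj E)"
  unfolding adj_def sym_def by (simp add: insert_commute)

lemma same_component_iff: "same_component E a b \<longleftrightarrow> (a, b) \<in> (adj E)\<^sup>*"
  unfolding same_component_def adj_def ..

lemma path_leaves_set:
  assumes "(a, z) \<in> R\<^sup>*" and "a \<in> A" and "z \<notin> A"
  shows "\<exists>u v. (a, u) \<in> R\<^sup>* \<and> u \<in> A \<and> (u, v) \<in> R \<and> v \<notin> A"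
  using assms by (induction rule: rtrancl_induct) blast+

lemma bridge_between_parts:
  assumes "sym R" and parts: "U \<union> L = R\<^sup>* `` {a}" "U \<inter> L = {}" and "u0 \<in> U" "v0 \<in> L"
  shows "\<exists>u\<in>U. \<exists>v\<in>L. (u, v) \<in> R"
proof -
  have reach: "(a, z) \<in> R\<^sup>*" if "z \<in> U \<union> L" for z using that parts(1) by auto
  have a_in: "a \<in> U \<union> L" using parts(1) by auto
  show ?thesis
  proof (cases "a \<in> U")
    case True
    then obtain u v where "(a, u) \<in> R\<^sup>*" "u \<in> U" "(u, v) \<in> R" "v \<notin> U"
      using path_leaves_set[OF reach[of v0]] \<open>v0 \<in> L\<close> parts(2) by blast
    moreover from this have "v \<in> L" using parts(1) by (auto intro: rtrancl_into_rtrancl)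
    ultimately show ?thesis by blast
  next
    case False
    then obtain u v where "(a, u) \<in> R\<^sup>*" "u \<in> L" "(u, v) \<in> R" "v \<notin> L"
      using path_leaves_set[OF reach[of u0]] a_in \<open>u0 \<in> U\<close> parts(2) by blast
    moreover from this have "v \<in> U" using parts(1) by (auto intro: rtrancl_into_rtrancl)
    ultimately show ?thesis using \<open>sym R\<close> by (blast dest: symD)
  qed
qed

locale pairwise_averaging =
  fixes m :: nat and x :: "nat \<Rightarrow> nat \<Rightarrow> real" and p q :: "nat \<Rightarrow> nat"
    and act :: "nat \<Rightarrow> bool"
  assumes pair_valid: "\<And>t. p t \<in> {1..m} \<and> q t \<in> {1..m} \<and> p t \<noteq> q t"
    and update: "\<And>t i. i \<in> {1..m} \<Longrightarrow> x (Suc t) i =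
        (if i \<in> {p t, q t} \<and> act t then (x t (p t) + x t (q t)) / 2 else x t i)"
begin

definition energy :: "nat \<Rightarrow> real" where
  "energy t = (\<Sum>i\<in>{1..m}. (x t i)\<^sup>2)"

definition dissipation :: "nat \<Rightarrow> real" where
  "dissipation t = (if act t then (x t (p t) - x t (q t))\<^sup>2 else 0)"

text \<open>Replacing both u and v by their mean lowers u^2 + v^2 by (u - v)^2 / 2.\<close>
lemma energy_step: "energy (Suc t) = energy t - dissipation t / 2"
proof (cases "act t")
  case False
  hence "energy (Suc t) = energy t" unfolding energy_def using update by (intro sum.cong) auto
  thus ?thesis using False unfolding dissipation_def by simp
next
  case True
  define f where "f i = (x (Suc t) i)\<^sup>2 - (x t i)\<^sup>2" for i
  have pq: "p t \<in> {1..m}" "q t \<in> {1..m}" "p t \<noteq> q t" using pair_valid[of t] by auto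
  have "energy (Suc t) - energy t = (\<Sum>i\<in>{1..m}. f i)"
    unfolding energy_def f_def by (simp add: sum_subtractf)
  also have "\<dots> = (\<Sum>i\<in>{p t, q t}. f i)"
    using pq update unfolding f_def by (intro sum.mono_neutral_cong_right) auto
  also have "\<dots> = f (p t) + f (q t)" using pq by simp
  also have "\<dots> = - dissipation t / 2"
  proof -
    have mean: "x (Suc t) (p t) = (x t (p t) + x t (q t)) / 2"
               "x (Suc t) (q t) = (x t (p t) + x t (q t)) / 2"
      using True pq update[of "p t" t] update[of "q t" t] by auto
    show ?thesis unfolding f_def dissipation_def mean using True
      by (simp add: power2_eq_square field_simps)
  qed
  finally show ?thesis by simp
qed

text \<open>The energy is nonnegative, so the total dissipation is finite and the squared gap of
  the active pair tends to 0.\<close>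
lemma dissipation_tendsto_zero: "dissipation \<longlonglongrightarrow> 0"
proof -
  have nonneg: "dissipation t \<ge> 0" for t unfolding dissipation_def by simp
  have energy_sum: "energy t = energy 0 - (\<Sum>s<t. dissipation s) / 2" for t
    by (induction t) (simp_all add: energy_step field_simps)
  have "summable dissipation"
  proof (rule summableI_nonneg_bounded[where x = "2 * energy 0"])
    show "(\<Sum>s<t. dissipation s) \<le> 2 * energy 0" for t
      using energy_sum[of t] sum_nonneg[of "{1..m}" "\<lambda>i. (x t i)\<^sup>2"]
      unfolding energy_def by simp
  qed (rule nonneg)
  thus ?thesis by (rule summable_LIMSEQ_zero)
qed

lemma midpoint_invariant:
  assumes mid: "\<And>u v. P u \<Longrightarrow> P v \<Longrightarrow> P ((u + v) / 2)"
    and A: "A \<subseteq> {1..m}"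
    and closed: "\<And>s. t \<le> s \<Longrightarrow> s < t' \<Longrightarrow> act s \<Longrightarrow> p s \<in> A \<longleftrightarrow> q s \<in> A"
    and "t \<le> t'" and start: "\<forall>i\<in>A. P (x t i)"
  shows "\<forall>i\<in>A. P (x t' i)"
  using \<open>t \<le> t'\<close>
proof (induction t' rule: dec_induct)
  case base
  show ?case by (fact start)
next
  case (step s)
  show ?case
  proof
    fix i assume i: "i \<in> A"
    show "P (x (Suc s) i)"
    proof (cases "i \<in> {p s, q s} \<and> act s")
      case True
      hence "p s \<in> A" "q s \<in> A" using closed[OF step(1,2)] i by auto
      hence "P ((x s (p s) + x s (q s)) / 2)" using step(3) mid by blast
      moreover have "x (Suc s) i = (x s (p s) + x s (q s)) / 2"
        using True i A update[of i s] by auto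
      ultimately show ?thesis by (simp only:)
    qed (use i A update[of i s] step(3) in auto)
  qed
qed

definition edges :: "nat set set" where
  "edges = {{a, b} | a b. a \<in> {1..m} \<and> b \<in> {1..m} \<and> a \<noteq> b \<and>
        infinite {t. {p t, q t} = {a, b} \<and> act t}}"

lemma edge_endpoints:
  assumes "{u, v} \<in> edges"
  shows "u \<in> {1..m} \<and> v \<in> {1..m} \<and> infinite {t. {p t, q t} = {u, v} \<and> act t}"
proof -
  obtain a b where "{u, v} = {a, b}" "a \<in> {1..m}" "b \<in> {1..m}"
     "infinite {t. {p t, q t} = {a, b} \<and> act t}"
    using assms unfolding edges_def by auto
  thus ?thesis by (metis doubleton_eq_iff)
qed

lemma component_within_agents:
  assumes "(a, i) \<in> (adj edges)\<^sup>*" and "a \<in> {1..m}"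
  shows "i \<in> {1..m}"
  using assms by (induction rule: rtrancl_induct) (auto simp: adj_def dest: edge_endpoints)

text \<open>A pair that is not an edge is activated only finitely often; as there are finitely
  many pairs, all activations from some time on use edges.\<close>
lemma eventually_active_pairs_are_edges: "\<exists>T. \<forall>t\<ge>T. act t \<longrightarrow> {p t, q t} \<in> edges"
proof -
  let ?bad = "\<lambda>u v. {t. {p t, q t} = {u, v} \<and> act t \<and> {u, v} \<notin> edges}"
  have fin: "finite (?bad u v)" if "u \<in> {1..m}" "v \<in> {1..m}" for u v
  proof (rule ccontr)
    assume inf: "infinite (?bad u v)"
    then obtain t where "t \<in> ?bad u v" using infinite_imp_nonempty by blast
    hence "u \<noteq> v" using pair_valid[of t] by (auto simp: doubleton_eq_iff)
    moreover have "infinite {t. {p t, q t} = {u, v} \<and> act t}"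
      using inf by (rule infinite_super[rotated]) auto
    ultimately have "{u, v} \<in> edges" using that unfolding edges_def by blast
    with inf show False by simp
  qed
  have "{t. act t \<and> {p t, q t} \<notin> edges} \<subseteq> (\<Union>u\<in>{1..m}. \<Union>v\<in>{1..m}. ?bad u v)"
  proof
    fix t assume "t \<in> {t. act t \<and> {p t, q t} \<notin> edges}"
    thus "t \<in> (\<Union>u\<in>{1..m}. \<Union>v\<in>{1..m}. ?bad u v)" using pair_valid[of t] by blast
  qed
  hence "finite {t. act t \<and> {p t, q t} \<notin> edges}"
    by (rule finite_subset) (use fin in auto)
  then obtain T where "\<forall>t\<in>{t. act t \<and> {p t, q t} \<notin> edges}. t < T"
    using finite_nat_set_iff_bounded by blast
  hence "\<forall>t\<ge>T. act t \<longrightarrow> {p t, q t} \<in> edges" by (auto simp: not_less[symmetric])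
  thus ?thesis ..
qed

text \<open>Key step: a component split into an upper part U (opinions \<ge> \<theta> + h) and a lower
  part L (opinions < \<theta>) keeps this separation under averaging inside the parts, and some
  edge between the parts fires later; when the first such activation happens, the active
  gap exceeds h.\<close>
lemma separated_parts_meet_with_large_gap:
  assumes T: "\<forall>s\<ge>T. act s \<longrightarrow> {p s, q s} \<in> edges"
    and a: "a \<in> {1..m}"
    and parts: "U \<union> L = (adj edges)\<^sup>* `` {a}" "U \<inter> L = {}" "u0 \<in> U" "v0 \<in> L"
    and "T \<le> t" and below: "\<forall>i\<in>L. x t i < \<theta>" and above: "\<forall>i\<in>U. \<theta> + h \<le> x t i"
  shows "\<exists>\<tau>\<ge>t. act \<tau> \<and> h < \<bar>x \<tau> (p \<tau>) - x \<tau> (q \<tau>)\<bar>"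
proof -
  define C where "C = (adj edges)\<^sup>* `` {a}"
  have C_agents: "C \<subseteq> {1..m}" unfolding C_def using component_within_agents a by blast
  have C_closed: "p s \<in> C \<longleftrightarrow> q s \<in> C" if "T \<le> s" "act s" for s
  proof -
    have "(p s, q s) \<in> adj edges" "(q s, p s) \<in> adj edges"
      using T that by (auto simp: adj_def insert_commute)
    thus ?thesis unfolding C_def by (auto intro: rtrancl_into_rtrancl)
  qed
  define joins where "joins s \<longleftrightarrow> act s \<and> \<not> (p s \<in> U \<longleftrightarrow> q s \<in> U)" for s
  obtain u v where uv: "u \<in> U" "v \<in> L" "(u, v) \<in> adj edges"
    using bridge_between_parts[OF sym_adj parts] by blast
  hence "infinite {s. {p s, q s} = {u, v} \<and> act s}"
    using edge_endpoints unfolding adj_def by auto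
  then obtain s where "s \<ge> t" "{p s, q s} = {u, v}" "act s"
    unfolding infinite_nat_iff_unbounded_le by blast
  hence "t \<le> s \<and> joins s" using uv parts(2) unfolding joins_def by (auto simp: doubleton_eq_iff)
  define \<tau> where "\<tau> = (LEAST s. t \<le> s \<and> joins s)"
  have \<tau>: "t \<le> \<tau>" "joins \<tau>"
    using LeastI[of "\<lambda>s. t \<le> s \<and> joins s", OF \<open>t \<le> s \<and> joins s\<close>] unfolding \<tau>_def by auto
  have U_closed: "p s \<in> U \<longleftrightarrow> q s \<in> U" if "t \<le> s" "s < \<tau>" "act s" for s
    using not_less_Least[of s "\<lambda>s. t \<le> s \<and> joins s"] that unfolding \<tau>_def joins_def by auto
  have L_closed: "p s \<in> L \<longleftrightarrow> q s \<in> L" if "t \<le> s" "s < \<tau>" "act s" for s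
    using U_closed[OF that] C_closed[of s] that \<open>T \<le> t\<close> parts(1,2) unfolding C_def by auto
  have above_\<tau>: "\<forall>i\<in>U. \<theta> + h \<le> x \<tau> i"
    by (rule midpoint_invariant[OF _ _ U_closed \<tau>(1) above])
       (use C_agents parts(1) in \<open>auto simp: C_def\<close>)
  have below_\<tau>: "\<forall>i\<in>L. x \<tau> i < \<theta>"
    by (rule midpoint_invariant[OF _ _ L_closed \<tau>(1) below])
       (use C_agents parts(1) in \<open>auto simp: C_def\<close>)
  have "(p \<tau> \<in> U \<and> q \<tau> \<in> L) \<or> (p \<tau> \<in> L \<and> q \<tau> \<in> U)"
    using \<tau> C_closed[of \<tau>] \<open>T \<le> t\<close> parts(1) unfolding joins_def C_def by auto
  hence "h < \<bar>x \<tau> (p \<tau>) - x \<tau> (q \<tau>)\<bar>"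
  proof (elim disjE conjE)
    assume "p \<tau> \<in> U" "q \<tau> \<in> L"
    thus ?thesis using above_\<tau> below_\<tau> by fastforce
  next
    assume "p \<tau> \<in> L" "q \<tau> \<in> U"
    thus ?thesis using above_\<tau> below_\<tau> by fastforce
  qed
  thus ?thesis using \<tau> unfolding joins_def by blast
qed

lemma same_component_converges:
  assumes a: "a \<in> {1..m}" and ab: "(a, b) \<in> (adj edges)\<^sup>*"
  shows "(\<lambda>t. x t a - x t b) \<longlonglongrightarrow> 0"
proof (rule LIMSEQ_I)
  fix r :: real assume r: "r > 0"
  obtain T where T: "\<forall>s\<ge>T. act s \<longrightarrow> {p s, q s} \<in> edges"
    using eventually_active_pairs_are_edges by blast
  define C where "C = (adj edges)\<^sup>* `` {a}"
  have "C \<subseteq> {1..m}" unfolding C_def using component_within_agents a by blast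
  hence finC: "finite C" by (rule finite_subset) simp
  have aC: "a \<in> C" and bC: "b \<in> C" using ab unfolding C_def by auto
  define h where "h = r / card C"
  have "card C > 0" using finC aC card_gt_0_iff by blast
  hence h: "h > 0" using r unfolding h_def by simp
  obtain N where N: "\<forall>s\<ge>N. \<bar>dissipation s\<bar> < h\<^sup>2"
    using LIMSEQ_D[OF dissipation_tendsto_zero, of "h\<^sup>2"] h by auto
  have "\<bar>x t a - x t b\<bar> < r" if t: "t \<ge> max T N" for t
  proof (rule ccontr)
    assume far: "\<not> ?thesis"
    obtain U L \<theta> u0 v0 where parts: "U \<union> L = C" "U \<inter> L = {}" "u0 \<in> U" "v0 \<in> L"
        and sep: "\<forall>i\<in>L. x t i < \<theta>" "\<forall>i\<in>U. \<theta> + h \<le> x t i"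
    proof (cases "x t a - x t b \<ge> r")
      case True
      from gap_split[OF finC aC bC r this] obtain U L \<theta> where
        "U \<union> L = C" "U \<inter> L = {}" "a \<in> U" "b \<in> L"
        "\<forall>i\<in>L. x t i < \<theta>" "\<forall>i\<in>U. \<theta> + h \<le> x t i" unfolding h_def by blast
      thus ?thesis by (rule that)
    next
      case False
      hence "x t b - x t a \<ge> r" using far by auto
      from gap_split[OF finC bC aC r this] obtain U L \<theta> where
        "U \<union> L = C" "U \<inter> L = {}" "b \<in> U" "a \<in> L"
        "\<forall>i\<in>L. x t i < \<theta>" "\<forall>i\<in>U. \<theta> + h \<le> x t i" unfolding h_def by blast
      thus ?thesis by (rule that)
    qed
    obtain \<tau> where \<tau>: "\<tau> \<ge> t" "act \<tau>" "h < \<bar>x \<tau> (p \<tau>) - x \<tau> (q \<tau>)\<bar>"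
      using separated_parts_meet_with_large_gap[OF T a parts[unfolded C_def] _ sep] t by auto
    have "h\<^sup>2 < \<bar>x \<tau> (p \<tau>) - x \<tau> (q \<tau>)\<bar>\<^sup>2"
      using \<tau>(3) h by (intro power_strict_mono) auto
    hence "h\<^sup>2 < (x \<tau> (p \<tau>) - x \<tau> (q \<tau>))\<^sup>2" by simp
    hence "h\<^sup>2 < dissipation \<tau>" using \<tau>(2) unfolding dissipation_def by simp
    moreover have "\<bar>dissipation \<tau>\<bar> < h\<^sup>2" using N \<tau>(1) t by simp
    ultimately show False by simp
  qed
  thus "\<exists>N. \<forall>t\<ge>N. norm (x t a - x t b - 0) < r" by (intro exI[of _ "max T N"]) auto
qed

end

theorem theorem3:
  fixes M :: "'w measure"
    and m n :: nat
    and X :: "'w \<Rightarrow> nat \<Rightarrow> nat \<Rightarrow> nat \<Rightarrow> real"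
    and i1 i2 :: "'w \<Rightarrow> nat \<Rightarrow> nat"
    and S :: "'w \<Rightarrow> nat \<Rightarrow> nat set"
    and j a b :: nat
  assumes "prob_space M"
    and pair: "\<And>\<omega> t. \<omega> \<in> space M \<Longrightarrow>
        i1 \<omega> t \<in> {1..m} \<and> i2 \<omega> t \<in> {1..m} \<and> i1 \<omega> t \<noteq> i2 \<omega> t"
    and subj: "\<And>\<omega> t. \<omega> \<in> space M \<Longrightarrow> S \<omega> t \<subseteq> {1..n}"
    and update: "\<And>\<omega> t i k. \<omega> \<in> space M \<Longrightarrow> i \<in> {1..m} \<Longrightarrow> k \<in> {1..n} \<Longrightarrow>
        X \<omega> (Suc t) i k =
          (if i \<in> {i1 \<omega> t, i2 \<omega> t} \<and> k \<in> S \<omega> t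
           then (X \<omega> t (i1 \<omega> t) k + X \<omega> t (i2 \<omega> t) k) / 2
           else X \<omega> t i k)"
    and "j \<in> {1..n}" and "a \<in> {1..m}" and "b \<in> {1..m}"
  shows "{\<omega> \<in> space M. same_component (voting_edges m (i1 \<omega>) (i2 \<omega>) (S \<omega>) j) a b}
         \<subseteq> {\<omega> \<in> space M. (\<lambda>t. X \<omega> t a j - X \<omega> t b j) \<longlonglongrightarrow> 0}"
proof (intro subsetI CollectI conjI; elim CollectE conjE)
  fix \<omega> assume \<omega>: "\<omega> \<in> space M"
    and comp: "same_component (voting_edges m (i1 \<omega>) (i2 \<omega>) (S \<omega>) j) a b"
  show "\<omega> \<in> space M" by (fact \<omega>)
  interpret column: pairwise_averaging m "\<lambda>t i. X \<omega> t i j" "i1 \<omega>" "i2 \<omega>" "\<lambda>t. j \<in> S \<omega> t"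
    by unfold_locales (use pair[OF \<omega>] update[OF \<omega> _ \<open>j \<in> {1..n}\<close>] in auto)
  have "voting_edges m (i1 \<omega>) (i2 \<omega>) (S \<omega>) j = column.edges"
    unfolding voting_edges_def column.edges_def by simp
  with comp have "(a, b) \<in> (adj column.edges)\<^sup>*" by (simp add: same_component_iff)
  thus "(\<lambda>t. X \<omega> t a j - X \<omega> t b j) \<longlonglongrightarrow> 0"
    by (rule column.same_component_converges[OF \<open>a \<in> {1..m}\<close>])
qed

end
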